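(* Let $T$ be a rooted ordered tree with $n$ vertices and root $r$. The straight-line drawing of $T$ produced by Algorithm 1 is monotone (and planar), places $r$ at $(0,0)$, respects the order of the children of every vertex, and places every vertex at a grid point $(x,y)$ with $x,y\in\{0,1,\dots,n-1\}$; i.e., it fits on an $n\times n$ grid.
   Context: $T_v$ is the subtree rooted at $v$, $|T_v|$ its number of vertices. Strategy 1: for a non-leaf vertex $u$ with assigned $a_1(u)<a_2(u)$ and children $v_1,\dots,v_m$ in order, set $a_1(v_1)=a_1(u)$, $a_1(v_i)=a_2(v_{i-1})$ for $1<i\le m$, and $a_2(v_i)=a_1(v_i)+(a_2(u)-a_1(u))\cdot\frac{|T_{v_i}|}{|T_u|-1}$. Point rule $P_1(\theta_1,\theta_2)$ for $0\le\theta_1<\theta_2\le\frac{\pi}{2}$, with $d=\lceil\frac{1}{\theta_2-\theta_1}\rceil$: (i) if $\theta_2-\theta_1>\frac{\pi}{4}$: $(1,1)$; (ii) if $\arctan(\frac12)<\theta_2-\theta_1\le\frac{\pi}{4}$: $(1,2)$ if $\theta_1\ge\frac{\pi}{4}$, $(1,1)$ if $\arctan(\frac12)\le\theta_1<\frac{\pi}{4}$, $(2,1)$ if $\theta_1<\arctan(\frac12)$; (iii) if $\theta_2-\theta_1\le\arctan(\frac12)$: $(d,\lfloor\tan(\theta_1)d+1\rfloor)$ if $\theta_2\le\frac{\pi}{4}$, $(1,1)$ if $\theta_1<\frac{\pi}{4}<\theta_2$, $(\lfloor\tan(\frac{\pi}{2}-\theta_2)d+1\rfloor,d)$ if $\theta_1\ge\frac{\pi}{4}$.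 Algorithm 1 (input: rooted ordered tree $T$ with root $r$): set $a_1(r)=0$, $a_2(r)=\frac{\pi}{2}$ and assign angles to all other vertices top-down by Strategy 1; place $r$ at $(0,0)$; top-down, place each child $v$ of an already placed vertex $u$ at $(x_u,y_u)+P_1(a_1(v),a_2(v))$. A path $p_0,\dots,p_k$ in a straight-line drawing is monotone if there is a line $\ell$ such that the orthogonal projections of $p_0,\dots,p_k$ onto $\ell$ appear along $\ell$ in this order; a drawing is monotone if every pair of vertices is joined by a monotone path. *)

theory Defs
  imports "HOL-Analysis.Analysis"
begin

text \<open>A rooted ordered tree: a node with an ordered list of child subtrees.
  Vertices are identified with positions: lists of child indices from the root.\<close>

datatype otree = Node "otree list"

fun kids :: "otree \<Rightarrow> otree list" where
  "kids (Node ts) = ts"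

fun tsize :: "otree \<Rightarrow> nat" where
  "tsize (Node ts) = Suc (sum_list (map tsize ts))"

fun valid_pos :: "otree \<Rightarrow> nat list \<Rightarrow> bool" where
  "valid_pos t [] = True"
| "valid_pos t (i # p) = (i < length (kids t) \<and> valid_pos (kids t ! i) p)"

definition verts :: "otree \<Rightarrow> nat list set" where
  "verts T = {p. valid_pos T p}"

fun subtree :: "otree \<Rightarrow> nat list \<Rightarrow> otree" where
  "subtree t [] = t"
| "subtree t (i # p) = subtree (kids t ! i) p"

definition tree_edge :: "otree \<Rightarrow> nat list \<Rightarrow> nat list \<Rightarrow> bool" where
  "tree_edge T p q \<longleftrightarrow> p \<in> verts T \<and> q \<in> verts T \<and> (\<exists>i. q = p @ [i])"

definition adjacent :: "otree \<Rightarrow> nat list \<Rightarrow> nat list \<Rightarrow> bool" where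
  "adjacent T p q \<longleftrightarrow> tree_edge T p q \<or> tree_edge T q p"

text \<open>For a vertex u with children ts, interval (a1,a2) and N = |T_u|:
  left end a_1(v_i) of the i-th child (0-based); a_1(v_0) = a_1(u),
  a_1(v_{i+1}) = a_2(v_i) = a_1(v_i) + (a2 - a1) * |T_{v_i}| / (|T_u| - 1).\<close>
fun child_start :: "real \<Rightarrow> real \<Rightarrow> nat \<Rightarrow> otree list \<Rightarrow> nat \<Rightarrow> real" where
  "child_start a1 a2 N ts 0 = a1"
| "child_start a1 a2 N ts (Suc i) =
     child_start a1 a2 N ts i + (a2 - a1) * real (tsize (ts ! i)) / (real N - 1)"

definition child_interval :: "otree \<Rightarrow> real \<Rightarrow> real \<Rightarrow> nat \<Rightarrow> real \<times> real" where
  "child_interval t a1 a2 i =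
     (let b1 = child_start a1 a2 (tsize t) (kids t) i
      in (b1, b1 + (a2 - a1) * real (tsize (kids t ! i)) / (real (tsize t) - 1)))"

text \<open>angles t a1 a2 p = (a_1(p), a_2(p)) when the root of t gets (a1,a2).\<close>
fun angles :: "otree \<Rightarrow> real \<Rightarrow> real \<Rightarrow> nat list \<Rightarrow> real \<times> real" where
  "angles t a1 a2 [] = (a1, a2)"
| "angles t a1 a2 (i # p) =
     (case child_interval t a1 a2 i of (b1, b2) \<Rightarrow> angles (kids t ! i) b1 b2 p)"

definition P1 :: "real \<Rightarrow> real \<Rightarrow> int \<times> int" where
  "P1 \<theta>1 \<theta>2 =
    (let d = \<lceil>1 / (\<theta>2 - \<theta>1)\<rceil> in
     if \<theta>2 - \<theta>1 > pi / 4 then (1, 1)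
     else if arctan (1/2) < \<theta>2 - \<theta>1 then
       (if \<theta>1 \<ge> pi / 4 then (1, 2)
        else if arctan (1/2) \<le> \<theta>1 then (1, 1)
        else (2, 1))
     else
       (if \<theta>2 \<le> pi / 4 then (d, \<lfloor>tan \<theta>1 * real_of_int d + 1\<rfloor>)
        else if \<theta>1 < pi / 4 then (1, 1)
        else (\<lfloor>tan (pi / 2 - \<theta>2) * real_of_int d + 1\<rfloor>, d)))"

text \<open>place t a1 a2 p: position of vertex p relative to the root of t, where the
  root of t has angle interval (a1,a2); each child v of u is placed at
  pos(u) + P_1(a_1(v), a_2(v)).\<close>
fun place :: "otree \<Rightarrow> real \<Rightarrow> real \<Rightarrow> nat list \<Rightarrow> int \<times> int" where
  "place t a1 a2 [] = (0, 0)"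
| "place t a1 a2 (i # p) =
     (case child_interval t a1 a2 i of (b1, b2) \<Rightarrow>
        (let q = P1 b1 b2; r = place (kids t ! i) b1 b2 p
         in (fst q + fst r, snd q + snd r)))"

definition alg1 :: "otree \<Rightarrow> nat list \<Rightarrow> int \<times> int" where
  "alg1 T = place T 0 (pi / 2)"

definition pt :: "(nat list \<Rightarrow> int \<times> int) \<Rightarrow> nat list \<Rightarrow> real \<times> real" where
  "pt f p = (real_of_int (fst (f p)), real_of_int (snd (f p)))"

definition dotp :: "real \<times> real \<Rightarrow> real \<times> real \<Rightarrow> real" where
  "dotp a b = fst a * fst b + snd a * snd b"

definition monotone_points :: "(real \<times> real) list \<Rightarrow> bool" where
  "monotone_points ps \<longleftrightarrow>
     (\<exists>d. d \<noteq> (0, 0) \<and> (\<forall>i. Suc i < length ps \<longrightarrow> dotp d (ps ! i) < dotp d (ps ! Suc i)))"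

definition is_tree_path :: "otree \<Rightarrow> nat list list \<Rightarrow> nat list \<Rightarrow> nat list \<Rightarrow> bool" where
  "is_tree_path T vs u v \<longleftrightarrow> vs \<noteq> [] \<and> hd vs = u \<and> last vs = v \<and> set vs \<subseteq> verts T \<and>
     (\<forall>i. Suc i < length vs \<longrightarrow> adjacent T (vs ! i) (vs ! Suc i))"

definition monotone_drawing :: "otree \<Rightarrow> (nat list \<Rightarrow> int \<times> int) \<Rightarrow> bool" where
  "monotone_drawing T f \<longleftrightarrow>
     (\<forall>u\<in>verts T. \<forall>v\<in>verts T. \<exists>vs. is_tree_path T vs u v \<and> monotone_points (map (pt f) vs))"

definition planar_drawing :: "otree \<Rightarrow> (nat list \<Rightarrow> int \<times> int) \<Rightarrow> bool" where
  "planar_drawing T f \<longleftrightarrow> inj_on f (verts T) \<and>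
     (\<forall>a b c d. tree_edge T a b \<and> tree_edge T c d \<and> (a, b) \<noteq> (c, d) \<longrightarrow>
        closed_segment (pt f a) (pt f b) \<inter> closed_segment (pt f c) (pt f d)
          \<subseteq> pt f ` ({a, b} \<inter> {c, d}))"

text \<open>Counterclockwise angle from vector a to vector b, in (0, 2 pi].\<close>
definition ccw_angle :: "real \<times> real \<Rightarrow> real \<times> real \<Rightarrow> real" where
  "ccw_angle a b =
     (let t = Arg (Complex (fst b) (snd b) / Complex (fst a) (snd a))
      in if t \<le> 0 then t + 2 * pi else t)"

definition vec :: "(nat list \<Rightarrow> int \<times> int) \<Rightarrow> nat list \<Rightarrow> nat list \<Rightarrow> real \<times> real" where
  "vec f u v = pt f v - pt f u"

definition respects_order :: "otree \<Rightarrow> (nat list \<Rightarrow> int \<times> int) \<Rightarrow> bool" where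
  "respects_order T f \<longleftrightarrow>
     (\<forall>u\<in>verts T. let m = length (kids (subtree T u)) in
        (u \<noteq> [] \<longrightarrow> (\<forall>i j. i < j \<and> j < m \<longrightarrow>
            ccw_angle (vec f u (butlast u)) (vec f u (u @ [i]))
              < ccw_angle (vec f u (butlast u)) (vec f u (u @ [j])))) \<and>
        (u = [] \<longrightarrow> (\<forall>i j. 0 < i \<and> i < j \<and> j < m \<longrightarrow>
            ccw_angle (vec f u (u @ [0])) (vec f u (u @ [i]))
              < ccw_angle (vec f u (u @ [0])) (vec f u (u @ [j])))))"

end

theory Submission
  imports Defs "HOL-Library.Sublist"
begin

text \<open>Strategy 1 gives every vertex an interval of directions inside \<open>[0, \<pi>/2]\<close>; the intervals
  of the children of a vertex are disjoint, ordered like the children, nested in the parent's, and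
  of width proportional to the subtree sizes. The point rule \<open>P\<^sub>1\<close> picks a lattice vector with
  direction strictly inside the interval, so the whole subtree of a child is drawn inside the open
  wedge of that child's interval, seen from the parent. Hence a downward path rises in direction
  \<open>(1, 1)\<close>; the path between two vertices through their lowest common ancestor \<open>w\<close> is monotone
  along the normal of a ray separating the wedges of the two children of \<open>w\<close> involved; the same
  separation yields planarity and the order of children. Finally \<open>P\<^sub>1(a, b)\<close> has coordinates at
  most \<open>(\<pi>/2) / (b - a)\<close>, and these budgets add up to \<open>n - 1\<close> along every root path.\<close>

lemma tan_diff_gt_diff:
  assumes "0 \<le> a" "a < b" "b < pi/2"
  shows "b - a < tan b - tan a"
proof -
  have "DERIV tan x :> inverse ((cos x)\<^sup>2)" if "a \<le> x" "x \<le> b" for x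
    using assms that cos_gt_zero_pi[THEN less_imp_neq] by (intro DERIV_tan) force
  then obtain \<xi> where \<xi>: "a < \<xi>" "\<xi> < b" and mvt: "tan b - tan a = (b - a) * inverse ((cos \<xi>)\<^sup>2)"
    using MVT2[OF \<open>a < b\<close>, of tan "\<lambda>x. inverse ((cos x)\<^sup>2)"] by blast
  have "0 < cos \<xi>" "cos \<xi> < 1"
    using \<xi> assms by (auto intro!: cos_gt_zero_pi cos_monotone_0_pi[of 0 \<xi>, simplified])
  then have "1 < inverse ((cos \<xi>)\<^sup>2)"
    by (simp add: one_less_inverse power_less_one_iff)
  then show ?thesis
    using mvt \<open>a < b\<close> by simp
qed

lemma arctan_half_gt: "pi/8 < arctan (1/2)"
proof -
  have "2 * arctan (1/2) = arctan (4/3)"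
    using arctan_add[of "1/2" "1/2"] by simp
  moreover have "pi/4 < arctan (4/3)"
    using arctan_less_iff[of 1 "4/3"] arctan_one by simp
  ultimately show ?thesis by simp
qed

lemma arctan_divide_swap:
  assumes "0 < x" "0 < y"
  shows "arctan (y / x) = pi/2 - arctan (x / y)"
  using arctan_inverse[of "x / y"] assms by simp

text \<open>The slope of the lattice point \<open>(d, \<lfloor>d tan a + 1\<rfloor>)\<close> exceeds \<open>tan a\<close> by at most
  \<open>1/d \<le> b - a < tan b - tan a\<close>, so its direction falls strictly inside \<open>(a, b)\<close>.\<close>
lemma lattice_slope_between:
  fixes d :: int
  assumes "0 \<le> a" "a < b" "b \<le> pi/4" "1 / (b - a) \<le> d"
  defines "y \<equiv> \<lfloor>tan a * d + 1\<rfloor>"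
  shows "1 \<le> y" "y \<le> d" "a < arctan (y / d)" "arctan (y / d) < b"
proof -
  have d: "0 < real_of_int d"
    using assms(2,4) by (smt (verit) divide_pos_pos)
  have "0 \<le> tan a"
    using assms by (intro tan_pos_pi2_le) auto
  then show "1 \<le> y"
    using d unfolding y_def by (simp add: le_floor_iff)
  have "tan a * d < y" "y \<le> tan a * d + 1"
    unfolding y_def by linarith+
  then have lower: "tan a < y / d" and "y / d \<le> tan a + 1 / d"
    using d by (simp_all add: less_divide_eq divide_le_eq algebra_simps)
  moreover have "1 / d \<le> b - a"
    using assms(2,4) d by (simp add: divide_le_eq mult.commute)
  moreover have "tan a + (b - a) < tan b"
    using tan_diff_gt_diff[of a b] assms pi_gt_zero by linarith
  ultimately have upper: "y / d < tan b"
    by linarith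
  have "tan b \<le> 1"
    using tan_mono_le[of b "pi/4"] assms pi_gt_zero tan_45 by simp
  then have "y / d < 1"
    using upper by linarith
  then show "y \<le> d"
    using d by (simp add: divide_less_eq)
  show "a < arctan (y / d)"
    using lower arctan_less_iff[of "tan a" "y / d"] arctan_tan[of a] assms pi_gt_zero by auto
  show "arctan (y / d) < b"
    using upper arctan_less_iff[of "y / d" "tan b"] arctan_tan[of b] assms pi_gt_zero by auto
qed

definition admissible_point :: "real \<Rightarrow> real \<Rightarrow> int \<times> int \<Rightarrow> bool" where
  "admissible_point a b q \<longleftrightarrow>
     1 \<le> fst q \<and> 1 \<le> snd q \<and>
     real_of_int (fst q) \<le> (pi/2) / (b - a) \<and> real_of_int (snd q) \<le> (pi/2) / (b - a) \<and>
     a < arctan (real_of_int (snd q) / real_of_int (fst q)) \<and>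
     arctan (real_of_int (snd q) / real_of_int (fst q)) < b"

lemma admissible_point_swap:
  assumes "admissible_point (pi/2 - b) (pi/2 - a) (x, y)"
  shows "admissible_point a b (y, x)"
proof -
  have "0 < real_of_int x" "0 < real_of_int y"
    using assms unfolding admissible_point_def by simp_all
  then show ?thesis
    using assms arctan_divide_swap[of y x] unfolding admissible_point_def by auto
qed

lemma P1_admissible_wide:
  assumes "0 \<le> a" "b \<le> pi/2" "arctan (1/2) < b - a"
  shows "admissible_point a b (P1 a b)"
proof -
  have "pi/8 < b - a"
    using arctan_half_gt assms(3) by linarith
  then have w: "0 < b - a"
    using pi_gt_zero by linarith
  have one_le: "1 \<le> (pi/2) / (b - a)"
    using assms w by (simp add: le_divide_eq)
  show ?thesis
  proof (cases "pi/4 < b - a")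
    case True
    then show ?thesis
      using assms one_le arctan_one unfolding P1_def admissible_point_def by auto
  next
    case False
    then have two_le: "2 \<le> (pi/2) / (b - a)"
      using w by (simp add: le_divide_eq)
    consider "pi/4 \<le> a" | "arctan (1/2) \<le> a" "a < pi/4" | "a < arctan (1/2)"
      by linarith
    then show ?thesis
    proof cases
      case 1
      then show ?thesis
        using False assms one_le two_le \<open>pi/8 < b - a\<close> arctan_half_gt arctan_inverse[of 2]
        unfolding P1_def admissible_point_def by auto
    next
      case 2
      then show ?thesis
        using False assms one_le arctan_one arctan_half_gt unfolding P1_def admissible_point_def by auto
    next
      case 3
      then show ?thesis
        using False assms one_le two_le arctan_half_gt unfolding P1_def admissible_point_def by auto
    qed
  qed
qed

lemma P1_admissible_narrow:
  assumes "0 \<le> a" "a < b" "b \<le> pi/2" "b - a \<le> arctan (1/2)"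
  shows "admissible_point a b (P1 a b)"
proof -
  define d where "d = \<lceil>1 / (b - a)\<rceil>"
  have "b - a \<le> pi/2 - 1"
    using assms(4) arctan_le_self[of "1/2"] pi_gt3 by simp
  then have "1 \<le> (pi/2 - 1) / (b - a)"
    using assms(2) by (simp add: le_divide_eq)
  then have "1 / (b - a) + 1 \<le> (pi/2) / (b - a)"
    by (simp add: diff_divide_distrib)
  then have d_le: "d \<le> (pi/2) / (b - a)"
    unfolding d_def by linarith
  have one_le: "1 \<le> (pi/2) / (b - a)"
    using assms by (simp add: le_divide_eq)
  have narrow: "\<not> pi/4 < b - a" "\<not> arctan (1/2) < b - a"
    using assms(4) arctan_half_gt arctan_le_self[of "1/2"] pi_gt3 by linarith+
  consider "b \<le> pi/4" | "a < pi/4" "pi/4 < b" | "pi/4 \<le> a"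
    by linarith
  then show ?thesis
  proof cases
    case 1
    define y where "y = \<lfloor>tan a * d + 1\<rfloor>"
    have "P1 a b = (d, y)"
      using 1 narrow by (simp add: P1_def d_def y_def Let_def)
    moreover have "1 / (b - a) \<le> d"
      unfolding d_def by simp
    then have "1 \<le> y" "y \<le> d" "a < arctan (y / d)" "arctan (y / d) < b"
      unfolding y_def by (rule lattice_slope_between[OF assms(1,2) 1])+
    ultimately show ?thesis
      using d_le unfolding admissible_point_def by auto
  next
    case 2
    then show ?thesis
      using narrow one_le arctan_one unfolding P1_def admissible_point_def by auto
  next
    case 3
    define x where "x = \<lfloor>tan (pi/2 - b) * d + 1\<rfloor>"
    have P1_eq: "P1 a b = (x, d)"
      using 3 narrow assms by (simp add: P1_def d_def x_def Let_def)
    have "0 \<le> pi/2 - b" "pi/2 - b < pi/2 - a" "pi/2 - a \<le> pi/4"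
      using assms 3 by auto
    moreover have "1 / ((pi/2 - a) - (pi/2 - b)) \<le> d"
      unfolding d_def by simp
    ultimately have "1 \<le> x" "x \<le> d" "pi/2 - b < arctan (x / d)" "arctan (x / d) < pi/2 - a"
      unfolding x_def by (rule lattice_slope_between)+
    then have "admissible_point (pi/2 - b) (pi/2 - a) (d, x)"
      using d_le unfolding admissible_point_def by auto
    then show ?thesis
      unfolding P1_eq by (rule admissible_point_swap)
  qed
qed

lemma P1_admissible:
  assumes "0 \<le> a" "a < b" "b \<le> pi/2"
  shows "admissible_point a b (P1 a b)"
  using P1_admissible_wide P1_admissible_narrow assms by fastforce

section \<open>Wedges\<close>

text \<open>Strictly left of the ray of angle \<open>a\<close> and strictly right of the ray of angle \<open>b\<close>.\<close>
definition in_wedge :: "real \<Rightarrow> real \<Rightarrow> real \<times> real \<Rightarrow> bool" where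
  "in_wedge a b v \<longleftrightarrow> 0 \<le> fst v \<and> 0 \<le> snd v \<and>
     0 < cos a * snd v - sin a * fst v \<and> 0 < sin b * fst v - cos b * snd v"

definition real_point :: "int \<times> int \<Rightarrow> real \<times> real" where
  "real_point q = (real_of_int (fst q), real_of_int (snd q))"

lemma admissible_point_in_wedge:
  assumes "0 \<le> a" "a < b" "b \<le> pi/2" "admissible_point a b q"
  shows "in_wedge a b (real_point q)"
proof -
  obtain x y where q: "q = (x, y)"
    by force
  have pos: "0 < real_of_int x" "0 < real_of_int y"
    and ang: "a < arctan (y / x)" "arctan (y / x) < b"
    using assms(4) unfolding admissible_point_def q by auto
  have "0 < cos a"
    using assms by (intro cos_gt_zero_pi) auto
  have "tan a < tan (arctan (y / x))"
    using ang assms arctan_bounded[of "y / x"] by (intro tan_monotone) auto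
  then have "sin a / cos a < y / x"
    by (simp only: tan_arctan) (simp only: tan_def)
  then have "sin a * x < y * cos a"
    using \<open>0 < cos a\<close> pos by (simp add: divide_less_eq less_divide_eq field_simps)
  moreover have "y * cos b < sin b * x"
  proof (cases "b = pi/2")
    case True
    then show ?thesis
      using pos by (simp only: cos_pi_half sin_pi_half)
  next
    case False
    then have "b < pi/2" "0 < cos b"
      using assms by (auto intro: cos_gt_zero_pi)
    then have "tan (arctan (y / x)) < tan b"
      using ang assms arctan_bounded[of "y / x"] by (intro tan_monotone) auto
    then have "y / x < sin b / cos b"
      by (simp only: tan_arctan) (simp only: tan_def)
    then show ?thesis
      using \<open>0 < cos b\<close> pos by (simp add: divide_less_eq less_divide_eq field_simps)
  qed
  ultimately show ?thesis
    unfolding in_wedge_def real_point_def q using pos by (simp add: algebra_simps)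
qed

lemma P1_in_wedge:
  assumes "0 \<le> a" "a < b" "b \<le> pi/2"
  shows "in_wedge a b (real_point (P1 a b))"
  using admissible_point_in_wedge[OF assms P1_admissible[OF assms]] .

lemma in_wedge_add: "in_wedge a b u \<Longrightarrow> in_wedge a b v \<Longrightarrow> in_wedge a b (u + v)"
  unfolding in_wedge_def by (simp add: algebra_simps)

lemma in_wedge_scaleR:
  assumes "0 < t" "in_wedge a b v"
  shows "in_wedge a b (t *\<^sub>R v)"
proof -
  have "0 < t * (cos a * snd v - sin a * fst v)" "0 < t * (sin b * fst v - cos b * snd v)"
    using assms unfolding in_wedge_def by auto
  then show ?thesis
    using assms unfolding in_wedge_def by (simp add: algebra_simps)
qed

lemma cross_dir_antimono:
  assumes "0 \<le> x" "0 \<le> y" "0 \<le> a" "a \<le> a'" "a' \<le> pi/2"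
  shows "cos a' * y - sin a' * x \<le> cos a * y - sin a * x"
proof -
  have "cos a' \<le> cos a" "sin a \<le> sin a'"
    using assms by (auto intro: cos_monotone_0_pi_le sin_monotone_2pi_le)
  then show ?thesis
    using assms by (smt (verit) mult_right_mono)
qed

lemma in_wedge_mono:
  assumes "in_wedge a' b' v" "0 \<le> a" "a \<le> a'" "a' \<le> pi/2" "0 \<le> b'" "b' \<le> b" "b \<le> pi/2"
  shows "in_wedge a b v"
proof -
  have "cos a' * snd v - sin a' * fst v \<le> cos a * snd v - sin a * fst v"
    "cos b * snd v - sin b * fst v \<le> cos b' * snd v - sin b' * fst v"
    using assms unfolding in_wedge_def by (auto intro: cross_dir_antimono)
  then show ?thesis
    using assms(1) unfolding in_wedge_def by auto
qed

lemma in_wedge_sum_pos: "in_wedge a b v \<Longrightarrow> 0 < fst v + snd v"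
  unfolding in_wedge_def by (cases "fst v = 0 \<and> snd v = 0") auto

lemma in_wedge_right_of_upper: "in_wedge a b v \<Longrightarrow> cos b * snd v - sin b * fst v < 0"
  unfolding in_wedge_def by auto

lemma in_wedge_left_of_lower:
  assumes "in_wedge a b v" "0 \<le> c" "c \<le> a" "a \<le> pi/2"
  shows "0 < cos c * snd v - sin c * fst v"
proof -
  have "cos a * snd v - sin a * fst v \<le> cos c * snd v - sin c * fst v"
    using assms unfolding in_wedge_def by (intro cross_dir_antimono) auto
  then show ?thesis
    using assms(1) unfolding in_wedge_def by auto
qed

lemma tsize_pos: "0 < tsize t"
  by (cases t) auto

lemma tsize_eq_Suc_sum: "tsize t = Suc (\<Sum>k<length (kids t). tsize (kids t ! k))"
  by (cases t) (simp add: sum_list_sum_nth atLeast0LessThan)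

lemma tsize_kid_less:
  assumes "i < length (kids t)"
  shows "tsize (kids t ! i) < tsize t"
proof -
  have "tsize (kids t ! i) \<le> (\<Sum>k<length (kids t). tsize (kids t ! k))"
    using assms by (intro member_le_sum) auto
  then show ?thesis
    using tsize_eq_Suc_sum[of t] by linarith
qed

lemma child_start_eq:
  "child_start a1 a2 N ts i = a1 + (a2 - a1) * real (\<Sum>k<i. tsize (ts ! k)) / (real N - 1)"
  by (induction i) (auto simp: add_divide_distrib ring_distribs)

lemma child_interval_eq:
  "child_interval t a1 a2 i =
     (a1 + (a2 - a1) * real (\<Sum>k<i. tsize (kids t ! k)) / (real (tsize t) - 1),
      a1 + (a2 - a1) * real (\<Sum>k<Suc i. tsize (kids t ! k)) / (real (tsize t) - 1))"
  unfolding child_interval_def Let_def child_start_eq by (simp add: add_divide_distrib ring_distribs)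

lemma child_interval_width:
  "snd (child_interval t a1 a2 i) - fst (child_interval t a1 a2 i) =
     (a2 - a1) * real (tsize (kids t ! i)) / (real (tsize t) - 1)"
  unfolding child_interval_eq by (simp add: diff_divide_distrib[symmetric] ring_distribs)

lemma child_intervals_ordered:
  assumes "a1 < a2" "i < j"
  shows "snd (child_interval t a1 a2 i) \<le> fst (child_interval t a1 a2 j)"
proof -
  define S where "S j = real (\<Sum>k<j. tsize (kids t ! k))" for j
  have "S (Suc i) \<le> S j"
    unfolding S_def of_nat_le_iff using assms by (intro sum_mono2) auto
  moreover have "0 \<le> real (tsize t) - 1"
    using tsize_pos[of t] by simp
  ultimately show ?thesis
    unfolding child_interval_eq S_def[symmetric] using assms
    by (auto intro!: divide_right_mono mult_left_mono)
qed

lemma child_interval_bounds: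
  assumes "a1 < a2" "i < length (kids t)"
  shows "a1 \<le> fst (child_interval t a1 a2 i)"
    "fst (child_interval t a1 a2 i) < snd (child_interval t a1 a2 i)"
    "snd (child_interval t a1 a2 i) \<le> a2"
proof -
  define S where "S j = real (\<Sum>k<j. tsize (kids t ! k))" for j
  define D where "D = real (tsize t) - 1"
  have "S (Suc i) \<le> S (length (kids t))"
    unfolding S_def of_nat_le_iff using assms by (intro sum_mono2) auto
  also have "\<dots> = D"
    using tsize_eq_Suc_sum[of t] unfolding S_def D_def by simp
  finally have "S (Suc i) \<le> D" .
  have "0 < D"
    using tsize_kid_less[OF assms(2)] tsize_pos[of "kids t ! i"] unfolding D_def by linarith
  have "0 \<le> S i"
    unfolding S_def by (rule of_nat_0_le_iff)
  then show "a1 \<le> fst (child_interval t a1 a2 i)"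
    unfolding child_interval_eq S_def[symmetric] D_def[symmetric] using assms \<open>0 < D\<close> by simp
  have "0 < (a2 - a1) * real (tsize (kids t ! i)) / D"
    using tsize_pos[of "kids t ! i"] \<open>0 < D\<close> assms by simp
  then show "fst (child_interval t a1 a2 i) < snd (child_interval t a1 a2 i)"
    using child_interval_width[of t a1 a2 i] unfolding D_def by simp
  have "(a2 - a1) * S (Suc i) \<le> (a2 - a1) * D"
    using \<open>S (Suc i) \<le> D\<close> assms by simp
  then have "(a2 - a1) * S (Suc i) / D \<le> a2 - a1"
    using \<open>0 < D\<close> by (simp add: divide_le_eq)
  then show "snd (child_interval t a1 a2 i) \<le> a2"
    unfolding child_interval_eq S_def[symmetric] D_def[symmetric] by simp
qed

lemma valid_pos_append: "valid_pos t (p @ q) \<longleftrightarrow> valid_pos t p \<and> valid_pos (subtree t p) q"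
  by (induction p arbitrary: t) auto

lemma angles_append:
  "angles t a1 a2 (p @ q) =
     angles (subtree t p) (fst (angles t a1 a2 p)) (snd (angles t a1 a2 p)) q"
  by (induction p arbitrary: t a1 a2) (auto split: prod.splits)

lemma place_append:
  "place t a1 a2 (p @ q) =
     place t a1 a2 p + place (subtree t p) (fst (angles t a1 a2 p)) (snd (angles t a1 a2 p)) q"
  by (induction p arbitrary: t a1 a2) (auto split: prod.splits simp: Let_def zero_prod_def plus_prod_def)

lemma
  assumes "child_interval t a1 a2 i = (b1, b2)"
  shows angles_Cons_eq: "angles t a1 a2 (i # p) = angles (kids t ! i) b1 b2 p"
    and place_Cons_eq: "place t a1 a2 (i # p) = P1 b1 b2 + place (kids t ! i) b1 b2 p"
  using assms by (simp_all add: Let_def plus_prod_def)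

lemma real_point_add: "real_point (q + r) = real_point q + real_point r"
  by (simp add: real_point_def plus_prod_def)

lemma angles_bounds:
  assumes "a1 < a2" "valid_pos t p"
  shows "a1 \<le> fst (angles t a1 a2 p) \<and> fst (angles t a1 a2 p) < snd (angles t a1 a2 p) \<and>
    snd (angles t a1 a2 p) \<le> a2"
  using assms
proof (induction p arbitrary: t a1 a2)
  case (Cons i p)
  obtain b1 b2 where c: "child_interval t a1 a2 i = (b1, b2)"
    by force
  have i: "i < length (kids t)" "valid_pos (kids t ! i) p"
    using Cons.prems by auto
  have "a1 \<le> b1" "b1 < b2" "b2 \<le> a2"
    using child_interval_bounds[OF Cons.prems(1) i(1)] c by (metis fst_conv snd_conv)+
  then show ?case
    using Cons.IH[of b1 b2 "kids t ! i"] i(2) unfolding angles_Cons_eq[OF c] by fastforce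
qed simp

lemma place_in_child_wedge:
  assumes "0 \<le> a1" "a1 < a2" "a2 \<le> pi/2" "valid_pos t (i # p)"
  shows "in_wedge (fst (child_interval t a1 a2 i)) (snd (child_interval t a1 a2 i))
           (real_point (place t a1 a2 (i # p)))"
  using assms
proof (induction p arbitrary: t a1 a2 i)
  case Nil
  obtain b1 b2 where c: "child_interval t a1 a2 i = (b1, b2)"
    by force
  have "i < length (kids t)"
    using Nil.prems(4) by simp
  then have "a1 \<le> b1" "b1 < b2" "b2 \<le> a2"
    using child_interval_bounds[OF Nil.prems(2)] c by (metis fst_conv snd_conv)+
  then show ?case
    using P1_in_wedge[of b1 b2] Nil.prems unfolding place_Cons_eq[OF c] c
    by (simp flip: zero_prod_def)
next
  case (Cons j p)
  obtain b1 b2 where c: "child_interval t a1 a2 i = (b1, b2)"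
    by force
  have i: "i < length (kids t)" "valid_pos (kids t ! i) (j # p)"
    using Cons.prems(4) by auto
  have b: "a1 \<le> b1" "b1 < b2" "b2 \<le> a2"
    using child_interval_bounds[OF Cons.prems(2) i(1)] c by (metis fst_conv snd_conv)+
  have "in_wedge (fst (child_interval (kids t ! i) b1 b2 j)) (snd (child_interval (kids t ! i) b1 b2 j))
      (real_point (place (kids t ! i) b1 b2 (j # p)))"
    using Cons.IH[OF _ b(2) _ i(2)] b Cons.prems by linarith
  moreover note child_interval_bounds[OF b(2), where i = j and t = "kids t ! i"]
  ultimately have "in_wedge b1 b2 (real_point (place (kids t ! i) b1 b2 (j # p)))"
    using i(2) b Cons.prems by (elim in_wedge_mono) auto
  moreover have "in_wedge b1 b2 (real_point (P1 b1 b2))"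
    using b Cons.prems by (intro P1_in_wedge) auto
  ultimately show ?case
    unfolding place_Cons_eq[OF c] real_point_add c by (simp add: in_wedge_add)
qed

text \<open>The budget \<open>(|T| - 1) (\<pi>/2) / (a\<^sub>2 - a\<^sub>1)\<close> is additive: the point \<open>P\<^sub>1\<close> of a child interval
  \<open>(b\<^sub>1, b\<^sub>2)\<close> uses at most \<open>(\<pi>/2) / (b\<^sub>2 - b\<^sub>1)\<close>, the child's subtree the remaining
  \<open>(|T\<^sub>v| - 1) (\<pi>/2) / (b\<^sub>2 - b\<^sub>1)\<close>, and \<open>b\<^sub>2 - b\<^sub>1\<close> is proportional to \<open>|T\<^sub>v|\<close>.\<close>
lemma place_bounded:
  assumes "0 \<le> a1" "a1 < a2" "a2 \<le> pi/2" "valid_pos t p"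
  shows "0 \<le> fst (place t a1 a2 p) \<and> 0 \<le> snd (place t a1 a2 p) \<and>
    fst (place t a1 a2 p) \<le> (real (tsize t) - 1) * (pi/2) / (a2 - a1) \<and>
    snd (place t a1 a2 p) \<le> (real (tsize t) - 1) * (pi/2) / (a2 - a1)"
  using assms
proof (induction p arbitrary: t a1 a2)
  case Nil
  have "0 \<le> (real (tsize t) - 1) * (pi/2) / (a2 - a1)"
    using tsize_pos[of t] Nil.prems by simp
  then show ?case
    by simp
next
  case (Cons i p)
  obtain b1 b2 where c: "child_interval t a1 a2 i = (b1, b2)"
    by force
  have i: "i < length (kids t)" "valid_pos (kids t ! i) p"
    using Cons.prems(4) by auto
  have b: "a1 \<le> b1" "b1 < b2" "b2 \<le> a2"
    using child_interval_bounds[OF Cons.prems(2) i(1)] c by (metis fst_conv snd_conv)+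
  define s where "s = real (tsize (kids t ! i))"
  define D where "D = real (tsize t) - 1"
  have "1 \<le> s" "s \<le> D"
    using tsize_pos[of "kids t ! i"] tsize_kid_less[OF i(1)] unfolding s_def D_def by linarith+
  have width: "b2 - b1 = (a2 - a1) * s / D"
    using child_interval_width[of t a1 a2 i] c unfolding s_def D_def by simp
  have "(pi/2) / (b2 - b1) + (s - 1) * (pi/2) / (b2 - b1) = s * (pi/2) / (b2 - b1)"
    by (simp add: add_divide_distrib[symmetric] algebra_simps)
  also have "\<dots> = D * (pi/2) / (a2 - a1)"
    unfolding width using Cons.prems(2) \<open>1 \<le> s\<close> \<open>s \<le> D\<close> by (simp add: field_simps)
  finally have budget: "(pi/2) / (b2 - b1) + (s - 1) * (pi/2) / (b2 - b1) = D * (pi/2) / (a2 - a1)" .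
  have "admissible_point b1 b2 (P1 b1 b2)"
    using b Cons.prems by (intro P1_admissible) auto
  moreover have "0 \<le> fst (place (kids t ! i) b1 b2 p) \<and> 0 \<le> snd (place (kids t ! i) b1 b2 p) \<and>
      fst (place (kids t ! i) b1 b2 p) \<le> (s - 1) * (pi/2) / (b2 - b1) \<and>
      snd (place (kids t ! i) b1 b2 p) \<le> (s - 1) * (pi/2) / (b2 - b1)"
    unfolding s_def using Cons.IH[OF _ b(2) _ i(2)] b Cons.prems by linarith
  ultimately show ?case
    unfolding place_Cons_eq[OF c] D_def[symmetric] using budget
    unfolding admissible_point_def by (simp only: fst_add snd_add of_int_add) linarith
qed

section \<open>Grid size\<close>

lemma verts_Node: "verts (Node ts) = insert [] (\<Union>i<length ts. (#) i ` verts (ts ! i))"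
proof -
  have "p \<in> verts (Node ts) \<longleftrightarrow> p \<in> insert [] (\<Union>i<length ts. (#) i ` verts (ts ! i))" for p
    by (cases p) (auto simp: verts_def)
  then show ?thesis
    by blast
qed

lemma finite_verts: "finite (verts t)"
  by (induction t) (auto simp: verts_Node)

lemma card_verts: "card (verts t) = tsize t"
proof (induction t)
  case (Node ts)
  have "card (\<Union>i<length ts. (#) i ` verts (ts ! i)) = (\<Sum>i<length ts. card ((#) i ` verts (ts ! i)))"
    by (rule card_UN_disjoint) (auto simp: finite_verts)
  also have "\<dots> = (\<Sum>i<length ts. tsize (ts ! i))"
    using Node by (auto simp: card_image intro: sum.cong)
  also have "\<dots> = sum_list (map tsize ts)"
    by (simp add: sum_list_sum_nth atLeast0LessThan)
  moreover have "[] \<notin> (\<Union>i<length ts. (#) i ` verts (ts ! i))"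
    by auto
  ultimately show ?case
    unfolding verts_Node by (simp add: finite_verts)
qed

lemma alg1_in_grid:
  assumes "p \<in> verts T"
  shows "fst (alg1 T p) \<in> {0 .. int (card (verts T)) - 1} \<and>
         snd (alg1 T p) \<in> {0 .. int (card (verts T)) - 1}"
proof -
  have "(real (tsize T) - 1) * (pi/2) / (pi/2 - 0) = real_of_int (int (tsize T) - 1)"
    by simp
  then show ?thesis
    using place_bounded[of 0 "pi/2" T p] assms[unfolded verts_def]
    unfolding alg1_def card_verts by auto
qed

lemma prefix_or_fork:
  fixes u v :: "'a list"
  obtains r where "v = u @ r"
  | r where "u = v @ r"
  | w i j r s where "i \<noteq> j" "u = w @ i # r" "v = w @ j # s"
  using parallel_decomp[of u v] unfolding parallel_def prefix_def by blast

definition angle_range :: "otree \<Rightarrow> nat list \<Rightarrow> real \<times> real" where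
  "angle_range T p = angles T 0 (pi/2) p"

definition edge_vector :: "otree \<Rightarrow> nat list \<Rightarrow> real \<times> real" where
  "edge_vector T p = real_point (P1 (fst (angle_range T p)) (snd (angle_range T p)))"

definition in_vertex_wedge :: "otree \<Rightarrow> nat list \<Rightarrow> real \<times> real \<Rightarrow> bool" where
  "in_vertex_wedge T p = in_wedge (fst (angle_range T p)) (snd (angle_range T p))"

abbreviation pos :: "otree \<Rightarrow> nat list \<Rightarrow> real \<times> real" where
  "pos T \<equiv> pt (alg1 T)"

lemma angle_range_bounds:
  "valid_pos T p \<Longrightarrow>
     0 \<le> fst (angle_range T p) \<and> fst (angle_range T p) < snd (angle_range T p) \<and>
     snd (angle_range T p) \<le> pi/2"
  unfolding angle_range_def using angles_bounds[of 0 "pi/2" T p] by simp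

lemma angle_range_snoc:
  "angle_range T (p @ [i]) = child_interval (subtree T p) (fst (angle_range T p)) (snd (angle_range T p)) i"
  unfolding angle_range_def angles_append by (simp split: prod.splits)

lemma angle_range_nested:
  assumes "valid_pos T (p @ q)"
  shows "fst (angle_range T p) \<le> fst (angle_range T (p @ q)) \<and>
    snd (angle_range T (p @ q)) \<le> snd (angle_range T p)"
proof -
  have "valid_pos T p" "valid_pos (subtree T p) q"
    using assms valid_pos_append by auto
  then show ?thesis
    using angles_bounds[of "fst (angle_range T p)" "snd (angle_range T p)" "subtree T p" q]
      angle_range_bounds[of T p] unfolding angle_range_def angles_append by auto
qed

lemma pos_snoc:
  assumes "valid_pos T (p @ [i])"
  shows "pos T (p @ [i]) = pos T p + edge_vector T (p @ [i])"
proof -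
  have "place (subtree T p) (fst (angle_range T p)) (snd (angle_range T p)) [i] =
      P1 (fst (angle_range T (p @ [i]))) (snd (angle_range T (p @ [i])))"
    unfolding angle_range_snoc by (simp split: prod.splits add: Let_def)
  then show ?thesis
    unfolding edge_vector_def alg1_def pt_def real_point_def place_append angle_range_def
    by (simp add: plus_prod_def)
qed

lemma edge_vector_in_wedge:
  assumes "valid_pos T p"
  shows "in_vertex_wedge T p (edge_vector T p)"
  unfolding in_vertex_wedge_def edge_vector_def
  using P1_in_wedge angle_range_bounds[OF assms] by blast

lemma edge_vector_ge_one:
  assumes "valid_pos T p"
  shows "1 \<le> fst (edge_vector T p)" "1 \<le> snd (edge_vector T p)"
  using P1_admissible angle_range_bounds[OF assms]
  unfolding edge_vector_def real_point_def admissible_point_def by auto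

lemma in_vertex_wedge_mono:
  assumes "valid_pos T (p @ q)" "in_vertex_wedge T (p @ q) v"
  shows "in_vertex_wedge T p v"
proof -
  have "valid_pos T p"
    using assms valid_pos_append by auto
  then show ?thesis
    using assms(2) angle_range_bounds[of T p] angle_range_bounds[OF assms(1)] angle_range_nested[OF assms(1)]
    unfolding in_vertex_wedge_def by (elim in_wedge_mono) auto
qed

lemma edge_vector_in_ancestor_wedge:
  assumes "valid_pos T (p @ q)"
  shows "in_vertex_wedge T p (edge_vector T (p @ q))"
  using in_vertex_wedge_mono[OF assms edge_vector_in_wedge[OF assms]] .

lemma descendant_in_child_wedge:
  assumes "valid_pos T (p @ i # q)"
  shows "in_vertex_wedge T (p @ [i]) (pos T (p @ i # q) - pos T p)"
proof -
  have v: "valid_pos T p" "valid_pos (subtree T p) (i # q)"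
    using assms valid_pos_append by auto
  have "pos T (p @ i # q) - pos T p =
      real_point (place (subtree T p) (fst (angle_range T p)) (snd (angle_range T p)) (i # q))"
    unfolding alg1_def pt_def real_point_def place_append angle_range_def by simp
  then show ?thesis
    using place_in_child_wedge[OF _ _ _ v(2)] angle_range_bounds[OF v(1)]
    unfolding in_vertex_wedge_def angle_range_snoc by simp
qed

lemma sibling_angle_ranges_ordered:
  assumes "valid_pos T (p @ [j])" "i < j"
  shows "snd (angle_range T (p @ [i])) \<le> fst (angle_range T (p @ [j]))"
proof -
  have "valid_pos T p"
    using assms valid_pos_append by auto
  then show ?thesis
    using child_intervals_ordered[OF _ assms(2)] angle_range_bounds unfolding angle_range_snoc by blast
qed

lemma dotp_uminus_left: "dotp (- d) x = - dotp d x"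
  unfolding dotp_def by simp

lemma dotp_add_right: "dotp d (x + y) = dotp d x + dotp d y"
  unfolding dotp_def by (simp add: algebra_simps)

text \<open>The normal of the ray at the upper end of the left sibling's range separates the two wedges.\<close>
lemma sibling_wedges_separated_less:
  assumes "valid_pos T (w @ [i])" "valid_pos T (w @ [j])" "i < j"
  obtains d where "d \<noteq> 0"
    "\<And>x. in_vertex_wedge T (w @ [i]) x \<Longrightarrow> dotp d x < 0"
    "\<And>y. in_vertex_wedge T (w @ [j]) y \<Longrightarrow> 0 < dotp d y"
proof
  define b where "b = snd (angle_range T (w @ [i]))"
  show "(- sin b, cos b) \<noteq> 0"
  proof
    assume "(- sin b, cos b) = 0"
    then have "sin b = 0" "cos b = 0"
      by (simp_all add: zero_prod_def)
    then show False
      using sin_cos_squared_add[of b] by simp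
  qed
  show "dotp (- sin b, cos b) x < 0" if "in_vertex_wedge T (w @ [i]) x" for x
    using in_wedge_right_of_upper[OF that[unfolded in_vertex_wedge_def]]
    unfolding dotp_def b_def by (simp add: algebra_simps)
  have "0 \<le> b" "b \<le> fst (angle_range T (w @ [j]))" "fst (angle_range T (w @ [j])) \<le> pi/2"
    using sibling_angle_ranges_ordered[OF assms(2,3)] angle_range_bounds[OF assms(1)]
      angle_range_bounds[OF assms(2)] unfolding b_def by linarith+
  then show "0 < dotp (- sin b, cos b) y" if "in_vertex_wedge T (w @ [j]) y" for y
    using in_wedge_left_of_lower that unfolding in_vertex_wedge_def dotp_def
    by (simp add: algebra_simps)
qed

lemma sibling_wedges_separated:
  assumes "valid_pos T (w @ [i])" "valid_pos T (w @ [j])" "i \<noteq> j"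
  obtains d where "d \<noteq> 0"
    "\<And>x. in_vertex_wedge T (w @ [i]) x \<Longrightarrow> dotp d x < 0"
    "\<And>y. in_vertex_wedge T (w @ [j]) y \<Longrightarrow> 0 < dotp d y"
proof (cases "i < j")
  case True
  then show ?thesis
    using sibling_wedges_separated_less[OF assms(1,2)] that by blast
next
  case False
  then obtain d where "d \<noteq> 0"
    "\<And>y. in_vertex_wedge T (w @ [j]) y \<Longrightarrow> dotp d y < 0"
    "\<And>x. in_vertex_wedge T (w @ [i]) x \<Longrightarrow> 0 < dotp d x"
    using sibling_wedges_separated_less[OF assms(2,1)] assms(3) by (metis linorder_neqE_nat)
  then show ?thesis
    using that[of "- d"] by (simp add: dotp_uminus_left)
qed

lemma sibling_wedges_disjoint:
  assumes "valid_pos T (w @ [i])" "valid_pos T (w @ [j])" "i \<noteq> j"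
    "in_vertex_wedge T (w @ [i]) x" "in_vertex_wedge T (w @ [j]) y"
  shows "x \<noteq> y"
  using sibling_wedges_separated[OF assms(1-3)] assms(4,5) by (metis less_asym)

lemma in_vertex_wedge_sum_pos: "in_vertex_wedge T p v \<Longrightarrow> 0 < fst v + snd v"
  unfolding in_vertex_wedge_def by (rule in_wedge_sum_pos)

lemma in_vertex_wedge_nonzero: "in_vertex_wedge T p v \<Longrightarrow> v \<noteq> 0"
  using in_vertex_wedge_sum_pos by fastforce

section \<open>Planarity\<close>

lemma pos_inj:
  assumes "valid_pos T u" "valid_pos T v" "pos T u = pos T v"
  shows "u = v"
proof -
  have proper_descendant: False if "valid_pos T (x @ k # r)" "pos T (x @ k # r) = pos T x" for x k r
    using in_vertex_wedge_nonzero[OF descendant_in_child_wedge[OF that(1)]] that(2) by simp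
  show ?thesis
  proof (cases rule: prefix_or_fork[where u = u and v = v])
    case (1 r)
    then show ?thesis
    proof (cases r)
      case (Cons k r')
      with 1 have "v = u @ k # r'"
        by simp
      then show ?thesis
        using proper_descendant[of u k r'] assms by metis
    qed simp
  next
    case (2 r)
    then show ?thesis
    proof (cases r)
      case (Cons k r')
      with 2 have "u = v @ k # r'"
        by simp
      then show ?thesis
        using proper_descendant[of v k r'] assms by metis
    qed simp
  next
    case (3 w i j r s)
    have valid: "valid_pos T (w @ [i])" "valid_pos T (w @ [j])"
      using assms(1,2) 3 valid_pos_append[of T "w @ [i]" r] valid_pos_append[of T "w @ [j]" s] by auto
    have "in_vertex_wedge T (w @ [i]) (pos T u - pos T w)"
      "in_vertex_wedge T (w @ [j]) (pos T v - pos T w)"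
      using descendant_in_child_wedge assms(1,2) 3 by simp_all
    then have "pos T u - pos T w \<noteq> pos T v - pos T w"
      by (rule sibling_wedges_disjoint[OF valid \<open>i \<noteq> j\<close>])
    then show ?thesis
      using assms(3) by simp
  qed
qed

lemma closed_segment_edgeE:
  assumes "valid_pos T (a @ [i])" "z \<in> closed_segment (pos T a) (pos T (a @ [i]))"
  obtains u where "0 \<le> u" "u \<le> 1" "z = pos T a + u *\<^sub>R edge_vector T (a @ [i])"
proof -
  obtain u where u: "0 \<le> u" "u \<le> 1" "z = (1 - u) *\<^sub>R pos T a + u *\<^sub>R pos T (a @ [i])"
    using assms(2) unfolding in_segment by blast
  then have "z = pos T a + u *\<^sub>R edge_vector T (a @ [i])"
    unfolding pos_snoc[OF assms(1)] by (simp add: algebra_simps)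
  then show ?thesis
    using u that by blast
qed

lemma edge_point_in_wedge:
  assumes "valid_pos T (a @ [i])" "z \<in> closed_segment (pos T a) (pos T (a @ [i]))"
    "a @ [i] = w @ k # r"
  shows "(a = w \<and> z = pos T w) \<or> in_vertex_wedge T (w @ [k]) (z - pos T w)"
proof -
  obtain u where u: "0 \<le> u" "u \<le> 1" "z = pos T a + u *\<^sub>R edge_vector T (a @ [i])"
    using closed_segment_edgeE[OF assms(1,2)] by blast
  have "valid_pos T ((w @ [k]) @ r)"
    using assms(1) unfolding assms(3) by simp
  then have edge: "in_vertex_wedge T (w @ [k]) (edge_vector T (a @ [i]))"
    using edge_vector_in_ancestor_wedge[of T "w @ [k]" r] unfolding assms(3) by simp
  have start: "in_vertex_wedge T (w @ [k]) (pos T a - pos T w)" if "a \<noteq> w"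
  proof -
    obtain r' where "a = w @ k # r'"
      using assms(3) \<open>a \<noteq> w\<close> by (cases r rule: rev_cases) auto
    moreover have "valid_pos T a"
      using assms(1) valid_pos_append by auto
    ultimately show ?thesis
      using descendant_in_child_wedge by simp
  qed
  show ?thesis
  proof (cases "u = 0")
    case True
    then show ?thesis
      using start u by (cases "a = w") auto
  next
    case False
    then have step: "in_vertex_wedge T (w @ [k]) (u *\<^sub>R edge_vector T (a @ [i]))"
      using u edge unfolding in_vertex_wedge_def by (intro in_wedge_scaleR) auto
    have z: "z - pos T w = (pos T a - pos T w) + u *\<^sub>R edge_vector T (a @ [i])"
      using u by simp
    show ?thesis
    proof (cases "a = w")
      case False
      have "in_vertex_wedge T (w @ [k]) ((pos T a - pos T w) + u *\<^sub>R edge_vector T (a @ [i]))"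
        using start[OF False] step unfolding in_vertex_wedge_def by (rule in_wedge_add)
      then show ?thesis
        unfolding z by simp
    qed (use step z in simp)
  qed
qed

lemma edge_point_below_child:
  assumes "valid_pos T (a @ [i])" "z \<in> closed_segment (pos T a) (pos T (a @ [i]))"
  shows "fst (z - pos T (a @ [i])) + snd (z - pos T (a @ [i])) \<le> 0"
    "fst (z - pos T (a @ [i])) + snd (z - pos T (a @ [i])) = 0 \<Longrightarrow> z = pos T (a @ [i])"
proof -
  obtain u where u: "0 \<le> u" "u \<le> 1" "z = pos T a + u *\<^sub>R edge_vector T (a @ [i])"
    using closed_segment_edgeE[OF assms(1,2)] by blast
  have diff: "z - pos T (a @ [i]) = (u - 1) *\<^sub>R edge_vector T (a @ [i])"
    unfolding u(3) pos_snoc[OF assms(1)] by (simp add: algebra_simps)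
  have E: "1 \<le> fst (edge_vector T (a @ [i]))" "1 \<le> snd (edge_vector T (a @ [i]))"
    using edge_vector_ge_one[OF assms(1)] by auto
  have sum: "fst (z - pos T (a @ [i])) + snd (z - pos T (a @ [i])) =
      (u - 1) * (fst (edge_vector T (a @ [i])) + snd (edge_vector T (a @ [i])))"
    unfolding diff by (simp add: algebra_simps)
  show "fst (z - pos T (a @ [i])) + snd (z - pos T (a @ [i])) \<le> 0"
    unfolding sum using u E by (intro mult_nonpos_nonneg) auto
  assume "fst (z - pos T (a @ [i])) + snd (z - pos T (a @ [i])) = 0"
  then have "u = 1"
    using sum E by simp
  then show "z = pos T (a @ [i])"
    using diff by simp
qed

lemma nested_edges_meet_at_endpoint:
  assumes "valid_pos T (a @ [i])" "valid_pos T (c @ [j])" "c @ [j] = (a @ [i]) @ r" "r \<noteq> []"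
    "z \<in> closed_segment (pos T a) (pos T (a @ [i]))" "z \<in> closed_segment (pos T c) (pos T (c @ [j]))"
  shows "z \<in> pos T ` ({a, a @ [i]} \<inter> {c, c @ [j]})"
proof -
  obtain k r' where "r = k # r'"
    using assms(4) by (cases r) auto
  then have "c @ [j] = (a @ [i]) @ k # r'"
    using assms(3) by simp
  then have "(c = a @ [i] \<and> z = pos T (a @ [i])) \<or>
      in_vertex_wedge T ((a @ [i]) @ [k]) (z - pos T (a @ [i]))"
    by (rule edge_point_in_wedge[OF assms(2,6)])
  then show ?thesis
    using in_vertex_wedge_sum_pos edge_point_below_child(1)[OF assms(1,5)] by fastforce
qed

lemma forked_edges_meet_at_endpoint:
  assumes "valid_pos T (a @ [i])" "valid_pos T (c @ [j])"
    "a @ [i] = w @ k # r" "c @ [j] = w @ l # s" "k \<noteq> l"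
    "z \<in> closed_segment (pos T a) (pos T (a @ [i]))" "z \<in> closed_segment (pos T c) (pos T (c @ [j]))"
  shows "z \<in> pos T ` ({a, a @ [i]} \<inter> {c, c @ [j]})"
proof -
  have valid: "valid_pos T (w @ [k])" "valid_pos T (w @ [l])"
    using assms(1-4) valid_pos_append[of T "w @ [k]" r] valid_pos_append[of T "w @ [l]" s] by auto
  have A: "(a = w \<and> z = pos T w) \<or> in_vertex_wedge T (w @ [k]) (z - pos T w)"
    by (rule edge_point_in_wedge[OF assms(1,6,3)])
  have C: "(c = w \<and> z = pos T w) \<or> in_vertex_wedge T (w @ [l]) (z - pos T w)"
    by (rule edge_point_in_wedge[OF assms(2,7,4)])
  have "\<not> in_vertex_wedge T (w @ [k]) (z - pos T w)"
  proof
    assume k: "in_vertex_wedge T (w @ [k]) (z - pos T w)"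
    then have "z \<noteq> pos T w"
      using in_vertex_wedge_nonzero by fastforce
    then have "in_vertex_wedge T (w @ [l]) (z - pos T w)"
      using C by blast
    then show False
      using sibling_wedges_disjoint[OF valid assms(5) k] by blast
  qed
  then have "a = w" "z = pos T w"
    using A by auto
  moreover have "c = w"
    using C in_vertex_wedge_nonzero \<open>z = pos T w\<close> by fastforce
  ultimately show ?thesis
    by simp
qed

lemma alg1_planar: "planar_drawing T (alg1 T)"
proof -
  have "inj_on (alg1 T) (verts T)"
    using pos_inj unfolding inj_on_def verts_def pt_def by auto
  moreover have "closed_segment (pos T a) (pos T b) \<inter> closed_segment (pos T c) (pos T d)
      \<subseteq> pos T ` ({a, b} \<inter> {c, d})"
    if edges: "tree_edge T a b" "tree_edge T c d" "(a, b) \<noteq> (c, d)" for a b c d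
  proof
    fix z
    assume z: "z \<in> closed_segment (pos T a) (pos T b) \<inter> closed_segment (pos T c) (pos T d)"
    obtain i j where ij: "b = a @ [i]" "valid_pos T (a @ [i])" "d = c @ [j]" "valid_pos T (c @ [j])"
      using edges unfolding tree_edge_def verts_def by auto
    then have "b \<noteq> d"
      using edges(3) by auto
    show "z \<in> pos T ` ({a, b} \<inter> {c, d})"
    proof (cases rule: prefix_or_fork[where u = b and v = d])
      case (1 r)
      then show ?thesis
        using nested_edges_meet_at_endpoint[OF ij(2,4) _ _ ] z ij \<open>b \<noteq> d\<close> by auto
    next
      case (2 r)
      then have "z \<in> pos T ` ({c, d} \<inter> {a, b})"
        using nested_edges_meet_at_endpoint[OF ij(4,2) _ _ ] z ij \<open>b \<noteq> d\<close> by auto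
      then show ?thesis
        by (simp add: Int_commute)
    next
      case (3 w k l r s)
      then show ?thesis
        using forked_edges_meet_at_endpoint[OF ij(2,4) _ _ \<open>k \<noteq> l\<close>] z ij by auto
    qed
  qed
  ultimately show ?thesis
    unfolding planar_drawing_def by blast
qed

section \<open>Monotone paths\<close>

fun down_path :: "nat list \<Rightarrow> nat list \<Rightarrow> nat list list" where
  "down_path w [] = [w]"
| "down_path w (x # xs) = w # down_path (w @ [x]) xs"

lemma down_path_not_Nil [simp]: "down_path w xs \<noteq> []"
  by (cases xs) auto

lemma hd_down_path [simp]: "hd (down_path w xs) = w"
  by (cases xs) auto

lemma last_down_path [simp]: "last (down_path w xs) = w @ xs"
  by (induction xs arbitrary: w) auto

lemma set_down_path: "y \<in> set (down_path w xs) \<Longrightarrow> \<exists>k. y = w @ take k xs"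
proof (induction xs arbitrary: w)
  case (Cons x xs)
  show ?case
  proof (cases "y = w")
    case False
    then have "y \<in> set (down_path (w @ [x]) xs)"
      using Cons.prems by simp
    then obtain k where "y = (w @ [x]) @ take k xs"
      using Cons.IH by blast
    then show ?thesis
      by (intro exI[of _ "Suc k"]) simp
  qed (auto intro: exI[of _ 0])
qed simp

lemma successively_down_path:
  "(\<And>k. k < length xs \<Longrightarrow> R (w @ take k xs) (w @ take (Suc k) xs)) \<Longrightarrow>
     successively R (down_path w xs)"
proof (induction xs arbitrary: w)
  case (Cons x xs)
  have "R w (w @ [x])"
    using Cons.prems[of 0] by simp
  moreover have "successively R (down_path (w @ [x]) xs)"
    using Cons.prems[of "Suc _"] by (intro Cons.IH) simp
  ultimately show ?case
    by (simp add: successively_Cons)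
qed simp

lemma valid_pos_take: "valid_pos T (w @ xs) \<Longrightarrow> valid_pos T (w @ take k xs)"
  using valid_pos_append[of T "w @ take k xs" "drop k xs"] by simp

lemma down_path_in_tree:
  assumes "valid_pos T (w @ xs)"
  shows "set (down_path w xs) \<subseteq> verts T" "successively (adjacent T) (down_path w xs)"
proof -
  show "set (down_path w xs) \<subseteq> verts T"
    using valid_pos_take[OF assms] set_down_path unfolding verts_def by blast
  have "adjacent T (w @ take k xs) (w @ take (Suc k) xs)" if "k < length xs" for k
    using valid_pos_take[OF assms, of "Suc k"] valid_pos_take[OF assms, of k] that
    unfolding adjacent_def tree_edge_def verts_def by (auto simp: take_Suc_conv_app_nth)
  then show "successively (adjacent T) (down_path w xs)"
    by (rule successively_down_path)
qed

lemma successively_adjacent_flip: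
  "successively (\<lambda>p q. adjacent T q p) vs \<longleftrightarrow> successively (adjacent T) vs"
proof -
  have "(\<lambda>p q. adjacent T q p) = adjacent T"
    unfolding adjacent_def by auto
  then show ?thesis
    by (rule arg_cong)
qed

definition rises :: "otree \<Rightarrow> real \<times> real \<Rightarrow> nat list \<Rightarrow> nat list \<Rightarrow> bool" where
  "rises T d p q \<longleftrightarrow> dotp d (pos T p) < dotp d (pos T q)"

lemma down_path_rises:
  assumes "valid_pos T (w @ xs)"
    "\<And>k. k < length xs \<Longrightarrow> 0 < dotp d (edge_vector T (w @ take (Suc k) xs))"
  shows "successively (rises T d) (down_path w xs)"
proof (rule successively_down_path)
  fix k
  assume "k < length xs"
  then have "pos T (w @ take (Suc k) xs) = pos T (w @ take k xs) + edge_vector T (w @ take (Suc k) xs)"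
    using pos_snoc[of T "w @ take k xs" "xs ! k"] valid_pos_take[OF assms(1), of "Suc k"]
    by (simp add: take_Suc_conv_app_nth)
  then show "rises T d (w @ take k xs) (w @ take (Suc k) xs)"
    using assms(2)[OF \<open>k < length xs\<close>] unfolding rises_def by (simp add: dotp_add_right)
qed

lemma up_path_rises:
  assumes "valid_pos T (w @ xs)"
    "\<And>k. k < length xs \<Longrightarrow> dotp d (edge_vector T (w @ take (Suc k) xs)) < 0"
  shows "successively (rises T d) (rev (down_path w xs))"
proof -
  have "successively (rises T (- d)) (down_path w xs)"
    using assms by (intro down_path_rises) (auto simp: dotp_uminus_left)
  then show ?thesis
    unfolding successively_rev by (rule successively_mono) (simp add: rises_def dotp_uminus_left)
qed

lemma monotone_tree_path:
  assumes "vs \<noteq> []" "hd vs = u" "last vs = v" "set vs \<subseteq> verts T" "successively (adjacent T) vs"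
    "d \<noteq> 0" "successively (rises T d) vs"
  shows "is_tree_path T vs u v \<and> monotone_points (map (pos T) vs)"
proof
  show "is_tree_path T vs u v"
    using assms unfolding is_tree_path_def successively_conv_nth by auto
  show "monotone_points (map (pos T) vs)"
    using assms unfolding monotone_points_def successively_conv_nth rises_def zero_prod_def
    by (intro exI[of _ d]) auto
qed

lemma edge_vector_along_branch:
  assumes "valid_pos T (w @ i # r)" "k < length (i # r)"
  shows "in_vertex_wedge T (w @ [i]) (edge_vector T (w @ take (Suc k) (i # r)))"
proof -
  have "valid_pos T ((w @ [i]) @ take k r)"
    using valid_pos_take[of T "w @ [i]" r k] assms(1) by simp
  then show ?thesis
    using edge_vector_in_ancestor_wedge[of T "w @ [i]" "take k r"] by simp
qed

lemma alg1_monotone: "monotone_drawing T (alg1 T)"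
  unfolding monotone_drawing_def
proof (intro ballI)
  fix u v
  assume "u \<in> verts T" "v \<in> verts T"
  then have valid: "valid_pos T u" "valid_pos T v"
    unfolding verts_def by auto
  have diagonal: "0 < dotp (1, 1) (edge_vector T p)" "dotp (- 1, - 1) (edge_vector T p) < 0"
    if "valid_pos T p" for p
    using edge_vector_ge_one[OF that] unfolding dotp_def by auto
  show "\<exists>vs. is_tree_path T vs u v \<and> monotone_points (map (pos T) vs)"
  proof (cases rule: prefix_or_fork[where u = u and v = v])
    case (1 r)
    then have "successively (rises T (1, 1)) (down_path u r)"
      using valid diagonal(1) valid_pos_take by (intro down_path_rises) auto
    then show ?thesis
      using 1 valid down_path_in_tree[of T u r]
      by (intro exI[of _ "down_path u r"] monotone_tree_path) (auto simp: zero_prod_def)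
  next
    case (2 r)
    then have "successively (rises T (- 1, - 1)) (rev (down_path v r))"
      using valid diagonal(2) valid_pos_take by (intro up_path_rises) auto
    then show ?thesis
      using 2 valid down_path_in_tree[of T v r]
      by (intro exI[of _ "rev (down_path v r)"] monotone_tree_path)
        (auto simp: zero_prod_def hd_rev last_rev successively_adjacent_flip)
  next
    case (3 w i j r s)
    have "valid_pos T (w @ [i])" "valid_pos T (w @ [j])"
      using valid 3 valid_pos_take[of T w "i # r" 1] valid_pos_take[of T w "j # s" 1] by auto
    then obtain d where "d \<noteq> 0"
      and left: "\<And>x. in_vertex_wedge T (w @ [i]) x \<Longrightarrow> dotp d x < 0"
      and right: "\<And>y. in_vertex_wedge T (w @ [j]) y \<Longrightarrow> 0 < dotp d y"
      using sibling_wedges_separated \<open>i \<noteq> j\<close> by metis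
    define up where "up = rev (down_path w (i # r))"
    define down where "down = down_path (w @ [j]) s"
    have "successively (rises T d) up"
      unfolding up_def using valid 3 left edge_vector_along_branch by (intro up_path_rises) auto
    moreover have "successively (rises T d) (down_path w (j # s))"
      using valid 3 right edge_vector_along_branch by (intro down_path_rises) auto
    moreover have "successively (adjacent T) up" "set up \<subseteq> verts T"
      unfolding up_def successively_rev successively_adjacent_flip using down_path_in_tree[of T w "i # r"] valid 3
      by auto
    moreover have "successively (adjacent T) (down_path w (j # s))" "set (down_path w (j # s)) \<subseteq> verts T"
      using down_path_in_tree[of T w "j # s"] valid 3 by auto
    moreover have "last up = w" "hd up = u" "up \<noteq> []"
      unfolding up_def using 3 by (simp_all add: hd_rev last_rev)
    ultimately show ?thesis
      using \<open>d \<noteq> 0\<close> 3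
      by (intro exI[of _ "up @ down"] monotone_tree_path)
        (auto simp: down_def successively_append_iff successively_Cons)
  qed
qed

section \<open>Order of the children\<close>

definition cross :: "real \<times> real \<Rightarrow> real \<times> real \<Rightarrow> real" where
  "cross a b = fst a * snd b - snd a * fst b"

lemma sum_squares_pos: "(a :: real \<times> real) \<noteq> 0 \<Longrightarrow> 0 < (fst a)\<^sup>2 + (snd a)\<^sup>2"
  by (cases a) (auto simp: zero_prod_def sum_power2_gt_zero_iff)

text \<open>Lagrange's identity in the plane: \<open>a \<times> b\<^sub>2 \<cdot> a\<cdot>b\<^sub>1 - a \<times> b\<^sub>1 \<cdot> a\<cdot>b\<^sub>2 = |a|\<^sup>2 \<cdot> b\<^sub>1 \<times> b\<^sub>2\<close>.\<close>
lemma cross_over_dot_strict_mono: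
  assumes "0 < dotp a b1" "0 < dotp a b2" "0 < cross b1 b2" "a \<noteq> 0"
  shows "cross a b1 / dotp a b1 < cross a b2 / dotp a b2"
proof -
  have "cross a b2 * dotp a b1 - cross a b1 * dotp a b2 = ((fst a)\<^sup>2 + (snd a)\<^sup>2) * cross b1 b2"
    unfolding cross_def dotp_def by (simp add: power2_eq_square algebra_simps)
  also have "\<dots> > 0"
    using sum_squares_pos[OF assms(4)] assms(3) by simp
  finally show ?thesis
    using assms(1,2) by (simp add: divide_less_eq less_divide_eq field_simps)
qed

lemma Arg_quotient_eq_arctan:
  assumes "0 < dotp a b" "a \<noteq> 0"
  shows "Arg (Complex (fst b) (snd b) / Complex (fst a) (snd a)) = arctan (cross a b / dotp a b)"
proof -
  define z where "z = Complex (fst b) (snd b) / Complex (fst a) (snd a)"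
  define N where "N = (fst a)\<^sup>2 + (snd a)\<^sup>2"
  have "0 < N"
    unfolding N_def using sum_squares_pos[OF assms(2)] .
  have re: "Re z = dotp a b / N" and im: "Im z = cross a b / N"
    unfolding z_def N_def dotp_def cross_def Re_divide Im_divide by (simp_all add: algebra_simps)
  then have "Arg z = arctan (Im z / Re z)"
    using \<open>0 < N\<close> assms(1) by (intro arg_conv_arctan) simp
  also have "Im z / Re z = cross a b / dotp a b"
    using re im \<open>0 < N\<close> by simp
  finally show ?thesis
    unfolding z_def .
qed

lemma ccw_angle_eq_arctan:
  assumes "0 < dotp a b" "0 < cross a b" "a \<noteq> 0"
  shows "ccw_angle a b = arctan (cross a b / dotp a b)"
proof -
  have "0 < cross a b / dotp a b"
    using assms(1,2) by simp
  then show ?thesis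
    using Arg_quotient_eq_arctan[OF assms(1,3)] unfolding ccw_angle_def Let_def by simp
qed

lemma ccw_angle_opposite_eq_arctan:
  assumes "0 < dotp a b" "a \<noteq> 0"
  shows "ccw_angle (- a) b = arctan (cross a b / dotp a b) + pi"
proof -
  define z where "z = Complex (fst b) (snd b) / Complex (fst a) (snd a)"
  have "Re z = dotp a b / ((fst a)\<^sup>2 + (snd a)\<^sup>2)"
    unfolding z_def dotp_def Re_divide by (simp add: algebra_simps)
  then have "0 < Re z"
    using sum_squares_pos[OF assms(2)] assms(1) by simp
  then have "z \<noteq> 0"
    by auto
  have Arg_z: "Arg z = arctan (cross a b / dotp a b)"
    unfolding z_def by (rule Arg_quotient_eq_arctan[OF assms])
  then have "- (pi/2) < Arg z" "Arg z < pi/2"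
    using arctan_bounded by auto
  moreover have "Complex (fst b) (snd b) / Complex (fst (- a)) (snd (- a)) = - z"
    unfolding z_def by (simp add: complex_minus[symmetric])
  ultimately show ?thesis
    using Arg_minus[OF \<open>z \<noteq> 0\<close>] pi_gt_zero unfolding ccw_angle_def Let_def Arg_z by auto
qed

lemma cross_pos_of_separated_wedges:
  assumes "in_wedge a1 b1 u" "in_wedge a2 b2 v" "0 \<le> b1" "b1 \<le> a2" "a2 \<le> pi/2"
    "0 < fst u" "0 < snd u" "0 < fst v" "0 < snd v"
  shows "0 < cross u v"
proof -
  have r: "cos b1 * snd u - sin b1 * fst u < 0"
    by (rule in_wedge_right_of_upper[OF assms(1)])
  have l: "0 < cos b1 * snd v - sin b1 * fst v"
    by (rule in_wedge_left_of_lower[OF assms(2-5)])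
  have "0 \<le> sin b1" "0 \<le> cos b1"
    using assms(3-5) by (auto intro: sin_ge_zero cos_ge_zero)
  then have "0 < sin b1" "0 < cos b1"
    using r l assms(7,8) by (auto simp: order_le_less zero_less_mult_iff mult_less_0_iff)
  then have "snd u / fst u < sin b1 / cos b1" "sin b1 / cos b1 < snd v / fst v"
    using r l assms(6,8) by (simp_all add: divide_less_eq less_divide_eq field_simps)
  then have "snd u / fst u < snd v / fst v"
    by linarith
  then show ?thesis
    using assms(6,8) unfolding cross_def by (simp add: divide_less_eq less_divide_eq field_simps)
qed

lemma edge_vectors_dotp_pos:
  "valid_pos T p \<Longrightarrow> valid_pos T q \<Longrightarrow> 0 < dotp (edge_vector T p) (edge_vector T q)"
  using edge_vector_ge_one[of T p] edge_vector_ge_one[of T q] unfolding dotp_def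
  by (smt (verit) mult_pos_pos)

lemma edge_vector_nonzero: "valid_pos T p \<Longrightarrow> edge_vector T p \<noteq> 0"
  using edge_vector_ge_one(1)[of T p] by (auto simp: zero_prod_def)

lemma sibling_edge_vectors_cross_pos:
  assumes "valid_pos T (u @ [j])" "i < j"
  shows "0 < cross (edge_vector T (u @ [i])) (edge_vector T (u @ [j]))"
proof -
  have "valid_pos T (u @ [i])"
    using assms valid_pos_append[of T u "[i]"] valid_pos_append[of T u "[j]"] by auto
  then show ?thesis
    using cross_pos_of_separated_wedges sibling_angle_ranges_ordered[OF assms]
      edge_vector_in_wedge[of T "u @ [i]"] edge_vector_in_wedge[OF assms(1)]
      angle_range_bounds[of T "u @ [i]"] angle_range_bounds[OF assms(1)]
      edge_vector_ge_one[of T "u @ [i]"] edge_vector_ge_one[OF assms(1)]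
    unfolding in_vertex_wedge_def by (smt (verit))
qed

lemma vec_to_child:
  "valid_pos T (u @ [j]) \<Longrightarrow> vec (alg1 T) u (u @ [j]) = edge_vector T (u @ [j])"
  using pos_snoc unfolding vec_def by simp

lemma vec_to_parent:
  "valid_pos T (p @ [c]) \<Longrightarrow> vec (alg1 T) (p @ [c]) p = - edge_vector T (p @ [c])"
  using pos_snoc unfolding vec_def by simp

lemma children_ccw_ordered:
  assumes "valid_pos T (u @ [j])" "i < j" "u \<noteq> []"
  shows "ccw_angle (vec (alg1 T) u (butlast u)) (vec (alg1 T) u (u @ [i]))
    < ccw_angle (vec (alg1 T) u (butlast u)) (vec (alg1 T) u (u @ [j]))"
proof -
  obtain p c where u: "u = p @ [c]"
    using assms(3) by (cases u rule: rev_cases) auto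
  have valid: "valid_pos T u" "valid_pos T (u @ [i])"
    using assms(1,2) valid_pos_append[of T u "[i]"] valid_pos_append[of T u "[j]"] by auto
  let ?e = "edge_vector T u"
  have dot: "0 < dotp ?e (edge_vector T (u @ [i]))" "0 < dotp ?e (edge_vector T (u @ [j]))"
    using edge_vectors_dotp_pos valid assms(1) by auto
  have "cross ?e (edge_vector T (u @ [i])) / dotp ?e (edge_vector T (u @ [i]))
      < cross ?e (edge_vector T (u @ [j])) / dotp ?e (edge_vector T (u @ [j]))"
    using cross_over_dot_strict_mono[OF dot sibling_edge_vectors_cross_pos[OF assms(1,2)]]
      edge_vector_nonzero[OF valid(1)] by blast
  moreover have parent: "vec (alg1 T) u (butlast u) = - ?e"
    using vec_to_parent valid(1) unfolding u by simp
  ultimately show ?thesis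
    unfolding parent vec_to_child[OF valid(2)] vec_to_child[OF assms(1)]
      ccw_angle_opposite_eq_arctan[OF dot(1) edge_vector_nonzero[OF valid(1)]]
      ccw_angle_opposite_eq_arctan[OF dot(2) edge_vector_nonzero[OF valid(1)]]
    by (simp add: arctan_less_iff)
qed

lemma root_children_ccw_ordered:
  assumes "valid_pos T [j]" "0 < i" "i < j"
  shows "ccw_angle (vec (alg1 T) [] [0]) (vec (alg1 T) [] [i])
    < ccw_angle (vec (alg1 T) [] [0]) (vec (alg1 T) [] [j])"
proof -
  have valid: "valid_pos T [0]" "valid_pos T [i]"
    using assms by auto
  let ?e = "edge_vector T [0]"
  have dot: "0 < dotp ?e (edge_vector T [i])" "0 < dotp ?e (edge_vector T [j])"
    using edge_vectors_dotp_pos valid assms(1) by auto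
  have cross: "0 < cross ?e (edge_vector T [i])" "0 < cross ?e (edge_vector T [j])"
    using sibling_edge_vectors_cross_pos[of T "[]"] valid assms by auto
  have "cross ?e (edge_vector T [i]) / dotp ?e (edge_vector T [i])
      < cross ?e (edge_vector T [j]) / dotp ?e (edge_vector T [j])"
    using cross_over_dot_strict_mono[OF dot] sibling_edge_vectors_cross_pos[of T "[]"] assms
      edge_vector_nonzero[OF valid(1)] by simp
  then show ?thesis
    using vec_to_child[of T "[]"] valid assms(1)
      ccw_angle_eq_arctan[OF dot(1) cross(1) edge_vector_nonzero[OF valid(1)]]
      ccw_angle_eq_arctan[OF dot(2) cross(2) edge_vector_nonzero[OF valid(1)]]
    by (simp add: arctan_less_iff)
qed

lemma alg1_respects_order: "respects_order T (alg1 T)"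
proof -
  have "valid_pos T (u @ [j])" if "u \<in> verts T" "j < length (kids (subtree T u))" for u j
    using that valid_pos_append[of T u "[j]"] unfolding verts_def by simp
  then show ?thesis
    unfolding respects_order_def Let_def
    using children_ccw_ordered root_children_ccw_ordered by fastforce
qed

theorem theorem4:
  fixes T :: otree
  shows "monotone_drawing T (alg1 T) \<and> planar_drawing T (alg1 T) \<and>
         alg1 T [] = (0, 0) \<and> respects_order T (alg1 T) \<and>
         (\<forall>p\<in>verts T. fst (alg1 T p) \<in> {0 .. int (card (verts T)) - 1} \<and>
                       snd (alg1 T p) \<in> {0 .. int (card (verts T)) - 1})"
  using alg1_monotone[of T] alg1_planar[of T] alg1_respects_order[of T] alg1_in_grid[of _ T]
  by (simp add: alg1_def)

end
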